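(* Let $(X,\phi)$ be a flow on a compact metric space $(X,d)$. Then for every $\tau>0$, $$\frac1\tau\overline{\mathrm{mdim}}_M(\phi_\tau,X,d)\le\overline{\mathrm{mdim}}_M(\phi,X,d),\qquad \frac1\tau\underline{\mathrm{mdim}}_M(\phi_\tau,X,d)\le\underline{\mathrm{mdim}}_M(\phi,X,d).$$ If moreover $(X,\phi)$ is a uniformly Lipschitz flow, then both inequalities are equalities.
   Context: A flow: $\phi:X\times\mathbb{R}\to X$ continuous, $\phi_t(x)=\phi(x,t)$, $\phi_0=\mathrm{id}$, $\phi_{t+s}=\phi_t\circ\phi_s$. Uniformly Lipschitz: for every $t_0>0$ there is $L(t_0)>0$ such that for all $\epsilon>0$ and $x,y\in X$, $d(x,y)\le\epsilon/L(t_0)$ implies $d(\phi_sx,\phi_sy)<\epsilon$ for all $s\in[0,t_0]$. Flow metric mean dimension: $d_t(x,y)=\max_{s\in[0,t]}d(\phi_sx,\phi_sy)$; $r_t(\phi,X,d,\epsilon)$ is the minimal cardinality of $E\subset X$ with every $x\in X$ $d_t$-within $\epsilon$ (strictly) of $E$; $r(\phi,X,d,\epsilon)=\limsup_{t\to\infty}\frac1t\log r_t(\phi,X,d,\epsilon)$; $\overline{\mathrm{mdim}}_M(\phi,X,d)=\limsup_{\epsilon\to0}\frac{r(\phi,X,d,\epsilon)}{\log(1/\epsilon)}$, $\underline{\mathrm{mdim}}_M$ with $\liminf$. For the homeomorphism $\phi_\tau$: $d_{n,\phi_\tau}(x,y)=\max_{0\le j\le n-1}d(\phi_{\tau j}x,\phi_{\tau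 j}y)$; $r_n(\phi_\tau,X,d,\epsilon)$ is the minimal cardinality of $E\subset X$ with every $x\in X$ satisfying $d_{n,\phi_\tau}(x,y)<\epsilon$ for some $y\in E$; $r(\phi_\tau,X,d,\epsilon)=\limsup_{n\to\infty}\frac1n\log r_n(\phi_\tau,X,d,\epsilon)$; $\overline{\mathrm{mdim}}_M(\phi_\tau,X,d)=\limsup_{\epsilon\to0}\frac{r(\phi_\tau,X,d,\epsilon)}{\log(1/\epsilon)}$, $\underline{\mathrm{mdim}}_M(\phi_\tau,X,d)$ with $\liminf$. *)

theory Defs
  imports "HOL-Analysis.Analysis"
begin

text \<open>A (continuous) flow on X: phi x t = \<phi>_t(x).\<close>
definition is_flow :: "'a::metric_space set \<Rightarrow> ('a \<Rightarrow> real \<Rightarrow> 'a) \<Rightarrow> bool" where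
  "is_flow X phi \<longleftrightarrow>
     continuous_on (X \<times> UNIV) (\<lambda>(x, t). phi x t) \<and>
     (\<forall>x\<in>X. \<forall>t. phi x t \<in> X) \<and>
     (\<forall>x\<in>X. phi x 0 = x) \<and>
     (\<forall>x\<in>X. \<forall>t s. phi x (t + s) = phi (phi x s) t)"

definition uniformly_lipschitz_flow :: "'a::metric_space set \<Rightarrow> ('a \<Rightarrow> real \<Rightarrow> 'a) \<Rightarrow> bool" where
  "uniformly_lipschitz_flow X phi \<longleftrightarrow>
     (\<forall>t0>0. \<exists>L>0. \<forall>\<epsilon>>0. \<forall>x\<in>X. \<forall>y\<in>X.
        dist x y \<le> \<epsilon> / L \<longrightarrow> (\<forall>s\<in>{0..t0}. dist (phi x s) (phi y s) < \<epsilon>))"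

definition flow_dist :: "('a::metric_space \<Rightarrow> real \<Rightarrow> 'a) \<Rightarrow> real \<Rightarrow> 'a \<Rightarrow> 'a \<Rightarrow> real" where
  "flow_dist phi t x y = (SUP s\<in>{0..t}. dist (phi x s) (phi y s))"

definition flow_span :: "'a::metric_space set \<Rightarrow> ('a \<Rightarrow> real \<Rightarrow> 'a) \<Rightarrow> real \<Rightarrow> real \<Rightarrow> nat" where
  "flow_span X phi t \<epsilon> = Inf {card E | E. finite E \<and> E \<subseteq> X \<and>
       (\<forall>x\<in>X. \<exists>y\<in>E. flow_dist phi t x y < \<epsilon>)}"

definition flow_span_rate :: "'a::metric_space set \<Rightarrow> ('a \<Rightarrow> real \<Rightarrow> 'a) \<Rightarrow> real \<Rightarrow> ereal" where
  "flow_span_rate X phi \<epsilon> = Limsup at_top (\<lambda>t. ereal (ln (real (flow_span X phi t \<epsilon>)) / t))"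

definition flow_upper_mdim :: "'a::metric_space set \<Rightarrow> ('a \<Rightarrow> real \<Rightarrow> 'a) \<Rightarrow> ereal" where
  "flow_upper_mdim X phi = Limsup (at_right 0) (\<lambda>\<epsilon>. flow_span_rate X phi \<epsilon> / ereal (ln (1 / \<epsilon>)))"

definition flow_lower_mdim :: "'a::metric_space set \<Rightarrow> ('a \<Rightarrow> real \<Rightarrow> 'a) \<Rightarrow> ereal" where
  "flow_lower_mdim X phi = Liminf (at_right 0) (\<lambda>\<epsilon>. flow_span_rate X phi \<epsilon> / ereal (ln (1 / \<epsilon>)))"

text \<open>Time-tau map \<phi>_tau: d_{n,\<phi>_tau}(x,y) = max_{0 \<le> j \<le> n-1} d(\<phi>_{tau j} x, \<phi>_{tau j} y).\<close>
definition time_dist :: "('a::metric_space \<Rightarrow> real \<Rightarrow> 'a) \<Rightarrow> real \<Rightarrow> nat \<Rightarrow> 'a \<Rightarrow> 'a \<Rightarrow> real" where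
  "time_dist phi \<tau> n x y = (SUP j\<in>{..<n}. dist (phi x (\<tau> * real j)) (phi y (\<tau> * real j)))"

definition time_span :: "'a::metric_space set \<Rightarrow> ('a \<Rightarrow> real \<Rightarrow> 'a) \<Rightarrow> real \<Rightarrow> nat \<Rightarrow> real \<Rightarrow> nat" where
  "time_span X phi \<tau> n \<epsilon> = Inf {card E | E. finite E \<and> E \<subseteq> X \<and>
       (\<forall>x\<in>X. \<exists>y\<in>E. time_dist phi \<tau> n x y < \<epsilon>)}"

definition time_span_rate :: "'a::metric_space set \<Rightarrow> ('a \<Rightarrow> real \<Rightarrow> 'a) \<Rightarrow> real \<Rightarrow> real \<Rightarrow> ereal" where
  "time_span_rate X phi \<tau> \<epsilon> = Limsup sequentially (\<lambda>n. ereal (ln (real (time_span X phi \<tau> n \<epsilon>)) / real n))"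

definition time_upper_mdim :: "'a::metric_space set \<Rightarrow> ('a \<Rightarrow> real \<Rightarrow> 'a) \<Rightarrow> real \<Rightarrow> ereal" where
  "time_upper_mdim X phi \<tau> = Limsup (at_right 0) (\<lambda>\<epsilon>. time_span_rate X phi \<tau> \<epsilon> / ereal (ln (1 / \<epsilon>)))"

definition time_lower_mdim :: "'a::metric_space set \<Rightarrow> ('a \<Rightarrow> real \<Rightarrow> 'a) \<Rightarrow> real \<Rightarrow> ereal" where
  "time_lower_mdim X phi \<tau> = Liminf (at_right 0) (\<lambda>\<epsilon>. time_span_rate X phi \<tau> \<epsilon> / ereal (ln (1 / \<epsilon>)))"

end

theory Submission
  imports Defs
begin

(*
  Watching the flow on [0, \<tau> (n - 1)] is finer than sampling it at the times \<tau> j, j < n, so a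
  spanning set for the Bowen distance of the flow at time \<tau> (n - 1) spans for the time-\<tau> map
  with n iterates; hence r(\<phi>_\<tau>, \<epsilon>) / \<tau> \<le> r(\<phi>, \<epsilon>), and dividing by log(1/\<epsilon>) gives the
  inequalities. Conversely, if d(x, y) \<le> \<epsilon>/L keeps the orbits \<epsilon>-close during [0, \<tau>], then
  \<epsilon>/L-closeness at the sample times propagates to all of [0, \<tau> n], so
  r(\<phi>, \<epsilon>) \<le> r(\<phi>_\<tau>, \<epsilon>/L) / \<tau>. Since log(L/\<epsilon>) / log(1/\<epsilon>) \<rightarrow> 1 and replacing \<epsilon> by \<epsilon>/L does
  not change limits as \<epsilon> \<rightarrow> 0, the reverse inequalities follow.
*)

lemma Inf_card_mono:
  assumes "\<And>E. P E \<Longrightarrow> Q E" and "\<exists>E. P E"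
  shows "Inf {card E | E. Q E} \<le> Inf {card E | E. P E}"
proof -
  obtain E where "P E" and "Inf {card E | E. P E} = card E"
    using Inf_nat_def1[of "{card E | E. P E}"] assms(2) by auto
  then show ?thesis
    using assms(1) by (metis (mono_tags, lifting) cInf_lower bdd_below_bot mem_Collect_eq)
qed

lemma Inf_card_ge_1:
  assumes "\<And>E. P E \<Longrightarrow> finite E \<and> E \<noteq> {}" and "\<exists>E. P E"
  shows "1 \<le> Inf {card E | E. P E}"
proof -
  obtain E where "P E" and "Inf {card E | E. P E} = card E"
    using Inf_nat_def1[of "{card E | E. P E}"] assms(2) by auto
  then show ?thesis
    using assms(1) by (simp add: Suc_leI card_gt_0_iff)
qed

lemma grid_index_below:
  fixes \<tau> s :: real
  assumes "\<tau> > 0" and "0 \<le> s" and "s \<le> \<tau> * real n" and "n > 0"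
  obtains j where "j < n" and "\<tau> * real j \<le> s" and "s \<le> \<tau> * real j + \<tau>"
proof (cases "s = 0")
  case True
  then show ?thesis
    using that[of 0] assms by simp
next
  case False
  define j where "j = nat (\<lceil>s / \<tau>\<rceil> - 1)"
  have "s / \<tau> \<le> real n"
    using assms by (simp add: field_simps)
  then have "j < n"
    using assms(4) by (simp add: j_def) linarith
  moreover have "0 < \<lceil>s / \<tau>\<rceil>"
    using assms False by simp
  then have "real j = real_of_int \<lceil>s / \<tau>\<rceil> - 1"
    by (simp add: j_def)
  moreover have "s \<le> \<tau> * \<lceil>s / \<tau>\<rceil>"
    using mult_left_mono[OF le_of_int_ceiling[of "s / \<tau>"], of \<tau>] assms(1) by simp
  moreover have "\<tau> * \<lceil>s / \<tau>\<rceil> < s + \<tau>"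
  proof -
    have "\<lceil>s / \<tau>\<rceil> < s / \<tau> + 1"
      using ceiling_correct[of "s / \<tau>"] by linarith
    from mult_strict_left_mono[OF this assms(1)] show ?thesis
      using assms(1) by (simp add: distrib_left)
  qed
  ultimately show ?thesis
    using that[of j] by (simp add: right_diff_distrib)
qed

lemma nat_ceiling_divide_bounds:
  fixes t \<tau> d :: real
  assumes "\<tau> > 0" and "d > 0" and "\<tau> / d \<le> t"
  shows "t \<le> \<tau> * real (nat \<lceil>t / \<tau>\<rceil>)" and "\<tau> * real (nat \<lceil>t / \<tau>\<rceil>) \<le> (1 + d) * t"
proof -
  show "t \<le> \<tau> * real (nat \<lceil>t / \<tau>\<rceil>)"
    using real_nat_ceiling_ge[of "t / \<tau>"] assms(1) by (simp add: field_simps)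
  have "0 < t"
    using assms by (metis divide_pos_pos order_less_le_trans)
  then have "real (nat \<lceil>t / \<tau>\<rceil>) < t / \<tau> + 1"
    using ceiling_correct[of "t / \<tau>"] assms(1) by simp
  then have "\<tau> * real (nat \<lceil>t / \<tau>\<rceil>) < t + \<tau>"
    using assms(1) by (simp add: field_simps)
  moreover have "\<tau> \<le> d * t"
    using assms(2,3) by (simp add: field_simps)
  ultimately show "\<tau> * real (nat \<lceil>t / \<tau>\<rceil>) \<le> (1 + d) * t"
    by (simp add: algebra_simps)
qed

lemma filterlim_sample_times:
  "(\<tau>::real) > 0 \<Longrightarrow> filterlim (\<lambda>n. \<tau> * real (n - 1)) at_top sequentially"
  by (intro filterlim_tendsto_pos_mult_at_top[OF tendsto_const]
      filterlim_compose[OF filterlim_real_sequentially filterlim_minus_const_nat_at_top])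

lemma filterlim_nat_ceiling_divide:
  "(\<tau>::real) > 0 \<Longrightarrow> filterlim (\<lambda>t. nat \<lceil>t / \<tau>\<rceil>) sequentially at_top"
  unfolding filterlim_sequentially_iff_filterlim_real
  by (rule filterlim_at_top_mono[of "\<lambda>t. t / \<tau>"])
    (auto intro!: filterlim_at_top_mult_tendsto_pos[of "\<lambda>_. 1 / \<tau>", simplified] filterlim_ident
      always_eventually real_nat_ceiling_ge)

lemma ln_scaled_inverse_le:
  fixes L d e :: real
  assumes "L \<ge> 1" and "d > 0" and "0 < e" and "e < exp (- ln L / d)"
  shows "ln (1 / (e / L)) \<le> (1 + d) * ln (1 / e)"
proof -
  have "ln e < - ln L / d"
    using assms(3,4) by (metis exp_less_cancel_iff exp_ln)
  then have "ln L < - d * ln e"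
    using assms(2) by (simp add: field_simps)
  then show ?thesis
    using assms(1,3) by (simp add: ln_div algebra_simps)
qed

lemma ereal_le_mult_epsilon:
  fixes x y :: ereal
  assumes "\<And>d::real. d > 0 \<Longrightarrow> x \<le> ereal (1 + d) * y" and "0 \<le> y"
  shows "x \<le> y"
proof (cases y)
  case (real r)
  with assms(2) have "0 \<le> r"
    by simp
  show ?thesis
  proof (rule ereal_le_epsilon2)
    fix e :: real
    assume "0 < e"
    define d where "d = e / (r + 1)"
    have "0 < d"
      using \<open>0 < e\<close> \<open>0 \<le> r\<close> by (simp add: d_def)
    have "d * r \<le> e"
      using \<open>0 < e\<close> \<open>0 \<le> r\<close> by (simp add: d_def field_simps)
    then have "ereal (1 + d) * y \<le> y + ereal e"
      using real by (simp add: algebra_simps)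
    with assms(1)[OF \<open>0 < d\<close>] show "x \<le> y + ereal e"
      by (rule order_trans)
  qed
qed (use assms in auto)

lemma Limsup_compose_le:
  fixes f :: "'b \<Rightarrow> 'c::complete_lattice"
  assumes "filterlim h G F"
  shows "Limsup F (\<lambda>x. f (h x)) \<le> Limsup G f"
proof -
  have "Limsup F (\<lambda>x. f (h x)) \<le> Limsup (filtermap h F) f"
    by (rule Limsup_filtermap_ge)
  also have "\<dots> \<le> Limsup G f"
    using assms unfolding filterlim_def Limsup_def
    by (intro INF_superset_mono) (auto simp: le_filter_def)
  finally show ?thesis .
qed

lemma Liminf_compose_ge:
  fixes f :: "'b \<Rightarrow> 'c::complete_lattice"
  assumes "filterlim h G F"
  shows "Liminf G f \<le> Liminf F (\<lambda>x. f (h x))"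
proof -
  have "Liminf G f \<le> Liminf (filtermap h F) f"
    using assms unfolding filterlim_def Liminf_def
    by (intro SUP_subset_mono) (auto simp: le_filter_def)
  also have "\<dots> \<le> Liminf F (\<lambda>x. f (h x))"
    by (rule Liminf_filtermap_le)
  finally show ?thesis .
qed

lemma filterlim_at_right_0_scale:
  "(c::real) > 0 \<Longrightarrow> filterlim (\<lambda>x. c * x) (at_right 0) (at_right 0)"
  by (auto simp: filterlim_at intro!: tendsto_eq_intros eventually_mono[OF eventually_at_right_less])

lemma Limsup_at_right_0_rescale:
  fixes f :: "real \<Rightarrow> 'c::complete_lattice"
  assumes "c > 0"
  shows "Limsup (at_right 0) (\<lambda>x. f (x / c)) = Limsup (at_right 0) f"
proof (rule antisym)
  show "Limsup (at_right 0) (\<lambda>x. f (x / c)) \<le> Limsup (at_right 0) f"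
    using Limsup_compose_le[OF filterlim_at_right_0_scale[of "1 / c"]] assms by simp
  show "Limsup (at_right 0) f \<le> Limsup (at_right 0) (\<lambda>x. f (x / c))"
    using Limsup_compose_le[OF filterlim_at_right_0_scale[OF assms], of "\<lambda>x. f (x / c)"] assms
    by simp
qed

lemma Liminf_at_right_0_rescale:
  fixes f :: "real \<Rightarrow> 'c::complete_lattice"
  assumes "c > 0"
  shows "Liminf (at_right 0) (\<lambda>x. f (x / c)) = Liminf (at_right 0) f"
proof (rule antisym)
  show "Liminf (at_right 0) f \<le> Liminf (at_right 0) (\<lambda>x. f (x / c))"
    using Liminf_compose_ge[OF filterlim_at_right_0_scale[of "1 / c"]] assms by simp
  show "Liminf (at_right 0) (\<lambda>x. f (x / c)) \<le> Liminf (at_right 0) f"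
    using Liminf_compose_ge[OF filterlim_at_right_0_scale[OF assms], of "\<lambda>x. f (x / c)"] assms
    by simp
qed

lemma Limsup_mono_up_to_factor:
  fixes f g :: "'a \<Rightarrow> ereal"
  assumes "F \<noteq> bot" and "\<forall>\<^sub>F x in F. 0 \<le> g x"
    and "\<And>d::real. d > 0 \<Longrightarrow> \<forall>\<^sub>F x in F. f x \<le> ereal (1 + d) * g x"
  shows "Limsup F f \<le> Limsup F g"
proof (rule ereal_le_mult_epsilon)
  show "0 \<le> Limsup F g"
    using assms(1,2) by (rule le_Limsup)
  fix d :: real
  assume "d > 0"
  then have "Limsup F f \<le> Limsup F (\<lambda>x. ereal (1 + d) * g x)"
    by (intro Limsup_mono assms(3))
  also have "\<dots> = ereal (1 + d) * Limsup F g"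
    using assms(1) \<open>d > 0\<close> by (simp add: Limsup_ereal_mult_left)
  finally show "Limsup F f \<le> ereal (1 + d) * Limsup F g" .
qed

lemma Liminf_mono_up_to_factor:
  fixes f g :: "'a \<Rightarrow> ereal"
  assumes "F \<noteq> bot" and "\<forall>\<^sub>F x in F. 0 \<le> g x"
    and "\<And>d::real. d > 0 \<Longrightarrow> \<forall>\<^sub>F x in F. f x \<le> ereal (1 + d) * g x"
  shows "Liminf F f \<le> Liminf F g"
proof (rule ereal_le_mult_epsilon)
  show "0 \<le> Liminf F g"
    using assms(2) by (rule Liminf_bounded)
  fix d :: real
  assume "d > 0"
  then have "Liminf F f \<le> Liminf F (\<lambda>x. ereal (1 + d) * g x)"
    by (intro Liminf_mono assms(3))
  also have "\<dots> = ereal (1 + d) * Liminf F g"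
    using assms(1) \<open>d > 0\<close> by (simp add: Liminf_ereal_mult_left)
  finally show "Liminf F f \<le> ereal (1 + d) * Liminf F g" .
qed

lemma time_dist_less_iff:
  assumes "n > 0"
  shows "time_dist phi \<tau> n x y < e \<longleftrightarrow> (\<forall>j<n. dist (phi x (\<tau> * real j)) (phi y (\<tau> * real j)) < e)"
proof -
  let ?d = "\<lambda>j. dist (phi x (\<tau> * real j)) (phi y (\<tau> * real j))"
  have "time_dist phi \<tau> n x y = Max (?d ` {..<n})"
    unfolding time_dist_def using assms by (intro cSup_eq_Max) auto
  also have "\<dots> < e \<longleftrightarrow> (\<forall>j<n. ?d j < e)"
    using assms by (subst Max_less_iff) auto
  finally show ?thesis .
qed

lemma uniformly_lipschitz_flowE:
  assumes "uniformly_lipschitz_flow X phi" and "\<tau> > 0"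
  obtains L where "L \<ge> 1"
    and "\<And>e. e > 0 \<Longrightarrow>
           \<forall>x\<in>X. \<forall>y\<in>X. dist x y \<le> e / L \<longrightarrow> (\<forall>s\<in>{0..\<tau>}. dist (phi x s) (phi y s) < e)"
proof -
  obtain L0 where "L0 > 0" and L0: "\<forall>e>0. \<forall>x\<in>X. \<forall>y\<in>X.
      dist x y \<le> e / L0 \<longrightarrow> (\<forall>s\<in>{0..\<tau>}. dist (phi x s) (phi y s) < e)"
    using assms unfolding uniformly_lipschitz_flow_def by blast
  show thesis
  proof (rule that[of "max L0 1"])
    fix e :: real
    assume "e > 0"
    then have "e / max L0 1 \<le> e / L0"
      using \<open>L0 > 0\<close> by (simp add: frac_le)
    with L0 \<open>e > 0\<close> show "\<forall>x\<in>X. \<forall>y\<in>X. dist x y \<le> e / max L0 1 \<longrightarrow>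
        (\<forall>s\<in>{0..\<tau>}. dist (phi x s) (phi y s) < e)"
      by (meson order_trans)
  qed simp
qed

locale compact_flow =
  fixes X :: "'a::metric_space set" and phi :: "'a \<Rightarrow> real \<Rightarrow> 'a"
  assumes compact: "compact X" and nonempty: "X \<noteq> {}" and flow: "is_flow X phi"
begin

lemma continuous_on_flow: "continuous_on (X \<times> UNIV) (\<lambda>(x, t). phi x t)"
  and flow_in: "x \<in> X \<Longrightarrow> phi x t \<in> X"
  and flow_add: "x \<in> X \<Longrightarrow> phi x (t + s) = phi (phi x s) t"
  using flow unfolding is_flow_def by auto

lemma continuous_on_dist_orbits:
  assumes "x \<in> X" and "y \<in> X"
  shows "continuous_on S (\<lambda>s. dist (phi x s) (phi y s))"
proof -
  have "continuous_on S (phi z)" if "z \<in> X" for z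
  proof -
    have "continuous_on S (\<lambda>s. (\<lambda>(x, t). phi x t) (z, s))"
      by (rule continuous_on_compose2[OF continuous_on_flow])
        (use that in \<open>auto intro!: continuous_intros\<close>)
    then show ?thesis
      by simp
  qed
  then show ?thesis
    using assms by (intro continuous_intros)
qed

lemma flow_dist_less_iff:
  assumes "x \<in> X" and "y \<in> X" and "0 \<le> t"
  shows "flow_dist phi t x y < e \<longleftrightarrow> (\<forall>s\<in>{0..t}. dist (phi x s) (phi y s) < e)"
proof -
  let ?d = "\<lambda>s. dist (phi x s) (phi y s)"
  obtain s0 where s0: "s0 \<in> {0..t}" and max: "\<And>s. s \<in> {0..t} \<Longrightarrow> ?d s \<le> ?d s0"
    using continuous_attains_sup[OF compact_Icc _ continuous_on_dist_orbits[OF assms(1,2)], of 0 t] assms(3)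
    by auto
  then have "flow_dist phi t x y = ?d s0"
    unfolding flow_dist_def by (intro cSup_eq_maximum) auto
  then show ?thesis
    using s0 max by force
qed

lemma flow_spanning_set_exists:
  assumes "0 \<le> t" and "e > 0"
  shows "\<exists>E. finite E \<and> E \<subseteq> X \<and> (\<forall>x\<in>X. \<exists>y\<in>E. flow_dist phi t x y < e)"
proof -
  have "uniformly_continuous_on (X \<times> {0..t}) (\<lambda>(x, s). phi x s)"
    using compact continuous_on_flow
    by (intro compact_uniformly_continuous compact_Times compact_Icc) (auto elim: continuous_on_subset)
  then obtain \<delta> where "\<delta> > 0" and \<delta>:
    "\<And>p q. p \<in> X \<times> {0..t} \<Longrightarrow> q \<in> X \<times> {0..t} \<Longrightarrow> dist q p < \<delta> \<Longrightarrow>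
       dist ((\<lambda>(x, s). phi x s) q) ((\<lambda>(x, s). phi x s) p) < e"
    unfolding uniformly_continuous_on_def using assms(2) by metis
  obtain E where "finite E" "E \<subseteq> X" and cover: "X \<subseteq> (\<Union>y\<in>E. ball y \<delta>)"
    using seq_compact_imp_totally_bounded[OF compact_imp_seq_compact[OF compact]] \<open>\<delta> > 0\<close>
    by metis
  have "\<exists>y\<in>E. flow_dist phi t x y < e" if "x \<in> X" for x
  proof -
    obtain y where "y \<in> E" and "dist y x < \<delta>"
      using cover \<open>x \<in> X\<close> by auto
    with \<delta>[of "(y, s)" "(x, s)" for s] \<open>E \<subseteq> X\<close> \<open>x \<in> X\<close> assms(1)
    show ?thesis
      by (auto simp: flow_dist_less_iff dist_Pair_Pair dist_commute intro!: bexI[of _ y])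
  qed
  with \<open>finite E\<close> \<open>E \<subseteq> X\<close> show ?thesis
    by blast
qed

lemma time_dist_less_if_flow_dist_less:
  assumes "n > 0" and "\<tau> > 0" and "x \<in> X" and "y \<in> X"
    and "flow_dist phi (\<tau> * real (n - 1)) x y < e"
  shows "time_dist phi \<tau> n x y < e"
  using assms by (auto simp: time_dist_less_iff flow_dist_less_iff)

lemma time_spanning_set_exists:
  assumes "n > 0" and "\<tau> > 0" and "e > 0"
  shows "\<exists>E. finite E \<and> E \<subseteq> X \<and> (\<forall>x\<in>X. \<exists>y\<in>E. time_dist phi \<tau> n x y < e)"
  using flow_spanning_set_exists[of "\<tau> * real (n - 1)" e] time_dist_less_if_flow_dist_less assms
  by (metis mult_nonneg_nonneg of_nat_0_le_iff order_less_imp_le subset_iff)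

lemma flow_span_ge_1: "0 \<le> t \<Longrightarrow> e > 0 \<Longrightarrow> 1 \<le> flow_span X phi t e"
  unfolding flow_span_def using flow_spanning_set_exists nonempty by (intro Inf_card_ge_1) auto

lemma time_span_ge_1: "n > 0 \<Longrightarrow> \<tau> > 0 \<Longrightarrow> e > 0 \<Longrightarrow> 1 \<le> time_span X phi \<tau> n e"
  unfolding time_span_def using time_spanning_set_exists nonempty by (intro Inf_card_ge_1) auto

lemma time_span_le_flow_span:
  assumes "n > 0" and "\<tau> > 0" and "e > 0"
  shows "time_span X phi \<tau> n e \<le> flow_span X phi (\<tau> * real (n - 1)) e"
  unfolding time_span_def flow_span_def
proof (rule Inf_card_mono)
  show "\<exists>E. finite E \<and> E \<subseteq> X \<and> (\<forall>x\<in>X. \<exists>y\<in>E. flow_dist phi (\<tau> * real (n - 1)) x y < e)"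
    using assms by (intro flow_spanning_set_exists) auto
qed (use time_dist_less_if_flow_dist_less[OF assms(1,2)] in blast)

lemma flow_dist_less_if_time_dist_less:
  assumes lip: "\<forall>x\<in>X. \<forall>y\<in>X. dist x y \<le> \<delta> \<longrightarrow> (\<forall>s\<in>{0..\<tau>}. dist (phi x s) (phi y s) < e)"
    and "n > 0" and "\<tau> > 0" and "0 \<le> t" and "t \<le> \<tau> * real n" and "x \<in> X" and "y \<in> X"
    and "time_dist phi \<tau> n x y < \<delta>"
  shows "flow_dist phi t x y < e"
proof -
  have "dist (phi x s) (phi y s) < e" if "s \<in> {0..t}" for s
  proof -
    \<comment> \<open>restart both orbits at the last sample time \<tau> j \<le> s\<close>
    have "0 \<le> s" and "s \<le> \<tau> * real n"
      using that assms(5) by auto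
    then obtain j where "j < n" and j: "\<tau> * real j \<le> s" "s \<le> \<tau> * real j + \<tau>"
      using assms(2,3) grid_index_below by blast
    then have "dist (phi x (\<tau> * real j)) (phi y (\<tau> * real j)) \<le> \<delta>"
      using assms(2,8) by (auto simp: time_dist_less_iff)
    then have "dist (phi (phi x (\<tau> * real j)) (s - \<tau> * real j))
        (phi (phi y (\<tau> * real j)) (s - \<tau> * real j)) < e"
      using lip flow_in assms(6,7) j by simp
    then show ?thesis
      using flow_add[OF assms(6), of "s - \<tau> * real j" "\<tau> * real j"]
        flow_add[OF assms(7), of "s - \<tau> * real j" "\<tau> * real j"] by simp
  qed
  then show ?thesis
    using assms by (simp add: flow_dist_less_iff)
qed

lemma flow_span_le_time_span:
  assumes lip: "\<forall>x\<in>X. \<forall>y\<in>X. dist x y \<le> \<delta> \<longrightarrow> (\<forall>s\<in>{0..\<tau>}. dist (phi x s) (phi y s) < e)"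
    and "\<delta> > 0" and "n > 0" and "\<tau> > 0" and "0 \<le> t" and "t \<le> \<tau> * real n"
  shows "flow_span X phi t e \<le> time_span X phi \<tau> n \<delta>"
  unfolding flow_span_def time_span_def
  using time_spanning_set_exists[OF assms(3,4,2)] flow_dist_less_if_time_dist_less[OF assms(1,3-6)]
  by (intro Inf_card_mono) blast+

lemma time_span_rate_nonneg:
  assumes "\<tau> > 0" and "e > 0"
  shows "0 \<le> time_span_rate X phi \<tau> e"
  unfolding time_span_rate_def
proof (rule le_Limsup)
  show "\<forall>\<^sub>F n in sequentially. 0 \<le> ereal (ln (real (time_span X phi \<tau> n e)) / real n)"
    using eventually_gt_at_top[of 0]
    by eventually_elim (use time_span_ge_1 assms in simp)
qed simp

lemma time_span_rate_le_flow_span_rate: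
  assumes "\<tau> > 0" and "e > 0"
  shows "ereal (1 / \<tau>) * time_span_rate X phi \<tau> e \<le> flow_span_rate X phi e"
proof -
  let ?b = "\<lambda>t. ereal (ln (real (flow_span X phi t e)) / t)"
  have "ereal (1 / \<tau>) * time_span_rate X phi \<tau> e =
      Limsup sequentially (\<lambda>n. ereal (1 / \<tau>) * ereal (ln (real (time_span X phi \<tau> n e)) / real n))"
    unfolding time_span_rate_def using assms by (intro Limsup_ereal_mult_left[symmetric]) auto
  also have "\<dots> \<le> Limsup sequentially (\<lambda>n. ?b (\<tau> * real (n - 1)))"
  proof (rule Limsup_mono)
    show "\<forall>\<^sub>F n in sequentially.
        ereal (1 / \<tau>) * ereal (ln (real (time_span X phi \<tau> n e)) / real n) \<le> ?b (\<tau> * real (n - 1))"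
      using eventually_gt_at_top[of 1]
    proof eventually_elim
      case (elim n)
      have "1 \<le> time_span X phi \<tau> n e"
        using time_span_ge_1 assms elim by simp
      moreover have "time_span X phi \<tau> n e \<le> flow_span X phi (\<tau> * real (n - 1)) e"
        using time_span_le_flow_span assms elim by simp
      ultimately have "0 \<le> ln (real (time_span X phi \<tau> n e))"
        and "ln (real (time_span X phi \<tau> n e)) \<le> ln (real (flow_span X phi (\<tau> * real (n - 1)) e))"
        by simp_all
      then show ?case
        using assms elim by (simp add: frac_le)
    qed
  qed
  also have "\<dots> \<le> flow_span_rate X phi e"
    unfolding flow_span_rate_def by (intro Limsup_compose_le filterlim_sample_times assms(1))
  finally show ?thesis .
qed

lemma flow_span_growth_le_time_span_growth:
  assumes lip: "\<forall>x\<in>X. \<forall>y\<in>X. dist x y \<le> \<delta> \<longrightarrow> (\<forall>s\<in>{0..\<tau>}. dist (phi x s) (phi y s) < e)"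
    and "\<delta> > 0" and "\<tau> > 0" and "e > 0" and "d > 0" and "\<tau> / d \<le> t"
  defines "n \<equiv> nat \<lceil>t / \<tau>\<rceil>"
  shows "ln (real (flow_span X phi t e)) / t
    \<le> (1 + d) * (1 / \<tau> * (ln (real (time_span X phi \<tau> n \<delta>)) / real n))"
proof -
  define F where "F = real (flow_span X phi t e)"
  define T where "T = real (time_span X phi \<tau> n \<delta>)"
  have "0 < t"
    using assms(3,5,6) by (metis divide_pos_pos order_less_le_trans)
  then have "n > 0"
    using assms(3) by (simp add: n_def)
  note bounds = nat_ceiling_divide_bounds[OF assms(3,5,6), folded n_def]
  have "1 \<le> F" and "F \<le> T"
    using flow_span_ge_1 flow_span_le_time_span[OF lip assms(2) \<open>n > 0\<close> assms(3) _ bounds(1)]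
      \<open>0 < t\<close> assms(4) by (simp_all add: F_def T_def)
  then have "0 \<le> ln T" and "ln F \<le> ln T"
    by simp_all
  have "ln F / t \<le> ln T / t"
    using \<open>ln F \<le> ln T\<close> \<open>0 < t\<close> by (simp add: divide_right_mono)
  also have "\<dots> = (1 + d) * ln T / ((1 + d) * t)"
    using \<open>d > 0\<close> by simp
  also have "\<dots> \<le> (1 + d) * ln T / (\<tau> * real n)"
    using \<open>0 \<le> ln T\<close> \<open>d > 0\<close> \<open>n > 0\<close> assms(3) bounds(2) by (intro frac_le) simp_all
  also have "\<dots> = (1 + d) * (1 / \<tau> * (ln T / real n))"
    by simp
  finally show ?thesis
    by (simp add: F_def T_def)
qed

lemma flow_span_rate_le_time_span_rate:
  assumes lip: "\<forall>x\<in>X. \<forall>y\<in>X. dist x y \<le> \<delta> \<longrightarrow> (\<forall>s\<in>{0..\<tau>}. dist (phi x s) (phi y s) < e)"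
    and "\<delta> > 0" and "\<tau> > 0" and "e > 0"
  shows "flow_span_rate X phi e \<le> ereal (1 / \<tau>) * time_span_rate X phi \<tau> \<delta>"
proof -
  let ?a = "\<lambda>n. ereal (ln (real (time_span X phi \<tau> n \<delta>)) / real n)"
  have "flow_span_rate X phi e \<le> Limsup at_top (\<lambda>t. ereal (1 / \<tau>) * ?a (nat \<lceil>t / \<tau>\<rceil>))"
    unfolding flow_span_rate_def
  proof (rule Limsup_mono_up_to_factor)
    show "\<forall>\<^sub>F t in at_top. 0 \<le> ereal (1 / \<tau>) * ?a (nat \<lceil>t / \<tau>\<rceil>)"
      using eventually_gt_at_top[of 0]
    proof eventually_elim
      case (elim t)
      then have "1 \<le> time_span X phi \<tau> (nat \<lceil>t / \<tau>\<rceil>) \<delta>"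
        using time_span_ge_1 assms by simp
      then show ?case
        using assms by (simp del: of_nat_nat)
    qed
    fix d :: real
    assume "d > 0"
    show "\<forall>\<^sub>F t in at_top. ereal (ln (real (flow_span X phi t e)) / t)
        \<le> ereal (1 + d) * (ereal (1 / \<tau>) * ?a (nat \<lceil>t / \<tau>\<rceil>))"
      using eventually_ge_at_top[of "\<tau> / d"]
      by eventually_elim (use flow_span_growth_le_time_span_growth[OF assms \<open>d > 0\<close>] in simp)
  qed simp
  also have "\<dots> = ereal (1 / \<tau>) * Limsup at_top (\<lambda>t. ?a (nat \<lceil>t / \<tau>\<rceil>))"
    using assms by (intro Limsup_ereal_mult_left) auto
  also have "\<dots> \<le> ereal (1 / \<tau>) * time_span_rate X phi \<tau> \<delta>"
    unfolding time_span_rate_def using assms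
    by (intro ereal_mult_left_mono Limsup_compose_le filterlim_nat_ceiling_divide) auto
  finally show ?thesis .
qed

lemma eventually_time_quotient_le_flow_quotient:
  assumes "\<tau> > 0"
  shows "\<forall>\<^sub>F e in at_right 0. ereal (1 / \<tau>) * (time_span_rate X phi \<tau> e / ereal (ln (1 / e)))
    \<le> flow_span_rate X phi e / ereal (ln (1 / e))"
  using eventually_at_right_real[OF zero_less_one]
proof eventually_elim
  case (elim e)
  then have "0 < ln (1 / e)"
    by simp
  then show ?case
    using time_span_rate_le_flow_span_rate[OF assms, of e] elim
    by (simp add: ereal_times_divide_eq)
qed

lemma time_upper_mdim_le_flow_upper_mdim:
  assumes "\<tau> > 0"
  shows "ereal (1 / \<tau>) * time_upper_mdim X phi \<tau> \<le> flow_upper_mdim X phi"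
proof -
  have "ereal (1 / \<tau>) * time_upper_mdim X phi \<tau> =
      Limsup (at_right 0) (\<lambda>e. ereal (1 / \<tau>) * (time_span_rate X phi \<tau> e / ereal (ln (1 / e))))"
    unfolding time_upper_mdim_def using assms by (intro Limsup_ereal_mult_left[symmetric]) auto
  also have "\<dots> \<le> flow_upper_mdim X phi"
    unfolding flow_upper_mdim_def
    by (rule Limsup_mono[OF eventually_time_quotient_le_flow_quotient[OF assms]])
  finally show ?thesis .
qed

lemma time_lower_mdim_le_flow_lower_mdim:
  assumes "\<tau> > 0"
  shows "ereal (1 / \<tau>) * time_lower_mdim X phi \<tau> \<le> flow_lower_mdim X phi"
proof -
  have "ereal (1 / \<tau>) * time_lower_mdim X phi \<tau> =
      Liminf (at_right 0) (\<lambda>e. ereal (1 / \<tau>) * (time_span_rate X phi \<tau> e / ereal (ln (1 / e))))"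
    unfolding time_lower_mdim_def using assms by (intro Liminf_ereal_mult_left[symmetric]) auto
  also have "\<dots> \<le> flow_lower_mdim X phi"
    unfolding flow_lower_mdim_def
    by (rule Liminf_mono[OF eventually_time_quotient_le_flow_quotient[OF assms]])
  finally show ?thesis .
qed

lemma time_span_rate_quotient_nonneg:
  assumes "\<tau> > 0" and "0 < e" and "e < 1"
  shows "0 \<le> time_span_rate X phi \<tau> e / ereal (ln (1 / e))"
  using time_span_rate_nonneg[OF assms(1,2)] assms(2,3) by simp

lemma eventually_rescaled_time_quotient_nonneg:
  assumes "L \<ge> 1" and "\<tau> > 0"
  shows "\<forall>\<^sub>F e in at_right 0.
    0 \<le> ereal (1 / \<tau>) * (time_span_rate X phi \<tau> (e / L) / ereal (ln (1 / (e / L))))"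
  using eventually_at_right_real[OF zero_less_one]
proof eventually_elim
  case (elim e)
  then have "0 < e / L" and "e / L < 1"
    using assms(1) by (simp_all add: divide_less_eq)
  then show ?case
    using assms(2) by (intro ereal_0_le_mult time_span_rate_quotient_nonneg) simp_all
qed

lemma eventually_flow_quotient_le_time_quotient:
  assumes lip: "\<And>e. e > 0 \<Longrightarrow>
      \<forall>x\<in>X. \<forall>y\<in>X. dist x y \<le> e / L \<longrightarrow> (\<forall>s\<in>{0..\<tau>}. dist (phi x s) (phi y s) < e)"
    and "L \<ge> 1" and "\<tau> > 0" and "d > 0"
  shows "\<forall>\<^sub>F e in at_right 0. flow_span_rate X phi e / ereal (ln (1 / e))
    \<le> ereal (1 + d) * (ereal (1 / \<tau>) * (time_span_rate X phi \<tau> (e / L) / ereal (ln (1 / (e / L)))))"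
proof -
  have "0 < min 1 (exp (- ln L / d))"
    by simp
  from eventually_at_right_real[OF this] show ?thesis
  proof eventually_elim
    case (elim e)
    then have "0 < e" and "e < 1" and "e < exp (- ln L / d)"
      by simp_all
    define q where "q = ln (1 / e)"
    define q' where "q' = ln (1 / (e / L))"
    define R where "R = ereal (1 / \<tau>) * time_span_rate X phi \<tau> (e / L)"
    have "0 < q"
      using \<open>0 < e\<close> \<open>e < 1\<close> by (simp add: q_def)
    have "q' \<le> (1 + d) * q"
      using ln_scaled_inverse_le[OF assms(2,4) \<open>0 < e\<close> \<open>e < exp (- ln L / d)\<close>]
      by (simp add: q_def q'_def)
    have "0 < q'"
      using \<open>0 < e\<close> \<open>e < 1\<close> assms(2) by (simp add: q'_def divide_less_eq)
    have "0 \<le> R"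
      using time_span_rate_nonneg[OF assms(3)] \<open>0 < e\<close> assms(2,3) by (simp add: R_def)
    have "flow_span_rate X phi e / ereal q \<le> R / ereal q"
      using flow_span_rate_le_time_span_rate[OF lip] \<open>0 < e\<close> assms(2,3) \<open>0 < q\<close>
      by (simp add: R_def)
    also have "\<dots> = R * ereal (1 / q)"
      using \<open>0 < q\<close> by (simp add: divide_ereal_def inverse_eq_divide)
    also have "\<dots> \<le> R * ereal ((1 + d) / q')"
      using \<open>q' \<le> (1 + d) * q\<close> \<open>0 < q\<close> \<open>0 < q'\<close> \<open>0 \<le> R\<close>
      by (intro ereal_mult_left_mono) (simp_all add: field_simps)
    also have "\<dots> = ereal (1 + d) * (R / ereal q')"
      using \<open>0 < q'\<close> by (simp add: divide_ereal_def inverse_eq_divide mult_ac)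
    finally show ?case
      by (simp add: R_def q_def q'_def ereal_times_divide_eq)
  qed
qed

lemma flow_upper_mdim_le_time_upper_mdim:
  assumes "uniformly_lipschitz_flow X phi" and "\<tau> > 0"
  shows "flow_upper_mdim X phi \<le> ereal (1 / \<tau>) * time_upper_mdim X phi \<tau>"
proof -
  obtain L where "L \<ge> 1" and lip: "\<And>e. e > 0 \<Longrightarrow>
      \<forall>x\<in>X. \<forall>y\<in>X. dist x y \<le> e / L \<longrightarrow> (\<forall>s\<in>{0..\<tau>}. dist (phi x s) (phi y s) < e)"
    using uniformly_lipschitz_flowE[OF assms] by blast
  let ?G = "\<lambda>e. time_span_rate X phi \<tau> e / ereal (ln (1 / e))"
  have "flow_upper_mdim X phi \<le> Limsup (at_right 0) (\<lambda>e. ereal (1 / \<tau>) * ?G (e / L))"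
    unfolding flow_upper_mdim_def
    using eventually_rescaled_time_quotient_nonneg[OF \<open>L \<ge> 1\<close> assms(2)]
      eventually_flow_quotient_le_time_quotient[OF lip \<open>L \<ge> 1\<close> assms(2)]
    by (intro Limsup_mono_up_to_factor) simp_all
  also have "\<dots> = ereal (1 / \<tau>) * Limsup (at_right 0) (\<lambda>e. ?G (e / L))"
    using assms(2) by (intro Limsup_ereal_mult_left) auto
  also have "\<dots> = ereal (1 / \<tau>) * time_upper_mdim X phi \<tau>"
    unfolding time_upper_mdim_def using Limsup_at_right_0_rescale[of L ?G] \<open>L \<ge> 1\<close> by simp
  finally show ?thesis .
qed

lemma flow_lower_mdim_le_time_lower_mdim:
  assumes "uniformly_lipschitz_flow X phi" and "\<tau> > 0"
  shows "flow_lower_mdim X phi \<le> ereal (1 / \<tau>) * time_lower_mdim X phi \<tau>"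
proof -
  obtain L where "L \<ge> 1" and lip: "\<And>e. e > 0 \<Longrightarrow>
      \<forall>x\<in>X. \<forall>y\<in>X. dist x y \<le> e / L \<longrightarrow> (\<forall>s\<in>{0..\<tau>}. dist (phi x s) (phi y s) < e)"
    using uniformly_lipschitz_flowE[OF assms] by blast
  let ?G = "\<lambda>e. time_span_rate X phi \<tau> e / ereal (ln (1 / e))"
  have "flow_lower_mdim X phi \<le> Liminf (at_right 0) (\<lambda>e. ereal (1 / \<tau>) * ?G (e / L))"
    unfolding flow_lower_mdim_def
    using eventually_rescaled_time_quotient_nonneg[OF \<open>L \<ge> 1\<close> assms(2)]
      eventually_flow_quotient_le_time_quotient[OF lip \<open>L \<ge> 1\<close> assms(2)]
    by (intro Liminf_mono_up_to_factor) simp_all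
  also have "\<dots> = ereal (1 / \<tau>) * Liminf (at_right 0) (\<lambda>e. ?G (e / L))"
    using assms(2) by (intro Liminf_ereal_mult_left) auto
  also have "\<dots> = ereal (1 / \<tau>) * time_lower_mdim X phi \<tau>"
    unfolding time_lower_mdim_def using Liminf_at_right_0_rescale[of L ?G] \<open>L \<ge> 1\<close> by simp
  finally show ?thesis .
qed

end

theorem proposition2p7:
  fixes X :: "'a::metric_space set" and phi :: "'a \<Rightarrow> real \<Rightarrow> 'a"
  assumes "compact X" and "X \<noteq> {}" and "is_flow X phi"
  shows "(\<forall>\<tau>>0. ereal (1 / \<tau>) * time_upper_mdim X phi \<tau> \<le> flow_upper_mdim X phi \<and>
                ereal (1 / \<tau>) * time_lower_mdim X phi \<tau> \<le> flow_lower_mdim X phi) \<and>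
         (uniformly_lipschitz_flow X phi \<longrightarrow>
            (\<forall>\<tau>>0. ereal (1 / \<tau>) * time_upper_mdim X phi \<tau> = flow_upper_mdim X phi \<and>
                   ereal (1 / \<tau>) * time_lower_mdim X phi \<tau> = flow_lower_mdim X phi))"
proof -
  interpret compact_flow X phi
    using assms by unfold_locales
  show ?thesis
    using time_upper_mdim_le_flow_upper_mdim flow_upper_mdim_le_time_upper_mdim
      time_lower_mdim_le_flow_lower_mdim flow_lower_mdim_le_time_lower_mdim
    by (meson antisym)
qed

end
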